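(* Let $d\ge 1$ and $\ell\ge 3$ be integers. The number of arcs of the cyclic Kautz digraph $CK(d,\ell)$ is $$(d+1)d^{\ell}-(2d-1)\big((-1)^{\ell-1}d+d^{\ell-1}\big).$$
   Context: Let $\Sigma=\{0,1,\dots,d\}$ be an alphabet of $d+1$ symbols. The cyclic Kautz digraph $CK(d,\ell)$ has as vertices all sequences $a_1a_2\ldots a_\ell\in\Sigma^\ell$ with $a_i\neq a_{i+1}$ for $1\le i\le \ell-1$ and $a_1\neq a_\ell$. There is an arc from $a_1\ldots a_\ell$ to $b_1\ldots b_\ell$ if and only if both are vertices and $b_i=a_{i+1}$ for $1\le i\le \ell-1$. *)

theory Defs
  imports Main
begin

definition ck_vertices :: "nat \<Rightarrow> nat \<Rightarrow> nat list set" where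
  "ck_vertices d l = {a. length a = l \<and> set a \<subseteq> {0..d}
      \<and> (\<forall>i. i + 1 < l \<longrightarrow> a ! i \<noteq> a ! (i + 1))
      \<and> a ! 0 \<noteq> a ! (l - 1)}"

definition ck_arcs :: "nat \<Rightarrow> nat \<Rightarrow> (nat list \<times> nat list) set" where
  "ck_arcs d l = {(a, b). a \<in> ck_vertices d l \<and> b \<in> ck_vertices d l
      \<and> (\<forall>i. i + 1 < l \<longrightarrow> b ! i = a ! (i + 1))}"

end

theory Submission
  imports Defs
begin

text \<open>An arc \<open>a \<rightarrow> b\<close> of \<open>CK(d,l)\<close> is the same as a word \<open>x m v\<close> of length \<open>l + 1\<close>: the
common part \<open>m\<close> (of length \<open>l - 1\<close>) has no two equal consecutive letters, and each of \<open>x\<close>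
and \<open>v\<close> avoids both end letters of \<open>m\<close>. So the arcs number \<open>C d^2 + O (d - 1)^2\<close>, where
\<open>C\<close> resp. \<open>O\<close> counts the words \<open>m\<close> whose end letters agree resp. differ. Here
\<open>C + O = (d + 1) d^(l-2)\<close>, and prepending its last letter turns an open word of length \<open>n\<close>
bijectively into a closed word of length \<open>n + 1\<close>; hence closed words of length \<open>n + 1\<close>
number \<open>d^n + (-1)^n d\<close>, and the formula is a matter of algebra.\<close>

definition kautz_words :: "nat \<Rightarrow> nat \<Rightarrow> nat list set" where
  "kautz_words d n = {w. length w = n \<and> set w \<subseteq> {0..d} \<and> distinct_adj w}"

definition closed_kautz_words :: "nat \<Rightarrow> nat \<Rightarrow> nat list set" where
  "closed_kautz_words d n = {w \<in> kautz_words d n. hd w = last w}"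

definition open_kautz_words :: "nat \<Rightarrow> nat \<Rightarrow> nat list set" where
  "open_kautz_words d n = {w \<in> kautz_words d n. hd w \<noteq> last w}"

definition extension_letters :: "nat \<Rightarrow> nat list \<Rightarrow> nat set" where
  "extension_letters d m = {0..d} - {hd m, last m}"

lemma finite_kautz_words: "finite (kautz_words d n)"
proof (rule finite_subset)
  show "kautz_words d n \<subseteq> {w. set w \<subseteq> {0..d} \<and> length w = n}"
    unfolding kautz_words_def by auto
qed (simp add: finite_lists_length_eq)

lemma Cons_in_kautz_words_iff:
  "z # w \<in> kautz_words d (Suc n) \<longleftrightarrow> z \<le> d \<and> w \<in> kautz_words d n \<and> (w = [] \<or> z \<noteq> hd w)"
  by (auto simp: kautz_words_def distinct_adj_Cons)

lemma snoc_in_kautz_words_iff: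
  "w @ [v] \<in> kautz_words d (Suc n) \<longleftrightarrow> v \<le> d \<and> w \<in> kautz_words d n \<and> (w = [] \<or> last w \<noteq> v)"
  by (auto simp: kautz_words_def distinct_adj_append_iff)

lemma ck_vertices_eq_open_kautz_words:
  assumes "l \<ge> 1"
  shows "ck_vertices d l = open_kautz_words d l"
proof -
  have "a ! 0 = hd a \<and> a ! (l - 1) = last a" if "length a = l" for a :: "nat list"
    using that assms by (cases a) (auto simp: last_conv_nth)
  then show ?thesis
    unfolding ck_vertices_def open_kautz_words_def kautz_words_def distinct_adj_conv_nth
    by auto
qed

lemma card_kautz_words: "card (kautz_words d (Suc n)) = (d + 1) * d ^ n"
proof (induction n)
  case 0
  have "kautz_words d 1 = (\<lambda>x. [x]) ` {0..d}"
    by (auto simp: kautz_words_def length_Suc_conv)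
  then show ?case by (simp add: card_image inj_on_def)
next
  case (Suc n)
  let ?W = "kautz_words d (Suc n)"
  have "kautz_words d (Suc (Suc n)) = (\<lambda>(w, z). z # w) ` (SIGMA w:?W. {0..d} - {hd w})"
    by (force simp: length_Suc_conv Cons_in_kautz_words_iff kautz_words_def [of _ "Suc _"]
        image_iff)
  moreover have "inj_on (\<lambda>(w, z). z # w) (SIGMA w:?W. {0..d} - {hd w})"
    by (auto simp: inj_on_def)
  moreover have "card ({0..d} - {hd w}) = d" if "w \<in> ?W" for w
  proof -
    have "w \<noteq> []" "set w \<subseteq> {0..d}" using that by (auto simp: kautz_words_def)
    then have "hd w \<in> {0..d}" using hd_in_set by blast
    then show ?thesis by simp
  qed
  ultimately have "card (kautz_words d (Suc (Suc n))) = card ?W * d"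
    by (simp add: card_image finite_kautz_words)
  with Suc show ?case by (simp add: algebra_simps)
qed

lemma card_closed_plus_open_kautz_words:
  "card (closed_kautz_words d n) + card (open_kautz_words d n) = card (kautz_words d n)"
proof -
  have "kautz_words d n = closed_kautz_words d n \<union> open_kautz_words d n"
    and "closed_kautz_words d n \<inter> open_kautz_words d n = {}"
    by (auto simp: closed_kautz_words_def open_kautz_words_def)
  then show ?thesis
    using finite_kautz_words by (metis card_Un_disjoint finite_Un)
qed

lemma card_closed_kautz_words_Suc_Suc:
  "card (closed_kautz_words d (Suc (Suc n))) = card (open_kautz_words d (Suc n))"
proof -
  have "closed_kautz_words d (Suc (Suc n)) = (\<lambda>w. last w # w) ` open_kautz_words d (Suc n)"
  proof (intro equalityI subsetI)
    fix u assume u: "u \<in> closed_kautz_words d (Suc (Suc n))"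
    then obtain z w where uw: "u = z # w" and "w \<noteq> []"
      by (auto simp: closed_kautz_words_def kautz_words_def length_Suc_conv)
    with u have "z = last w" "w \<in> open_kautz_words d (Suc n)"
      by (auto simp: closed_kautz_words_def open_kautz_words_def Cons_in_kautz_words_iff)
    with uw show "u \<in> (\<lambda>w. last w # w) ` open_kautz_words d (Suc n)" by blast
  next
    fix u assume "u \<in> (\<lambda>w. last w # w) ` open_kautz_words d (Suc n)"
    then obtain w where "u = last w # w" and w: "w \<in> open_kautz_words d (Suc n)" by blast
    moreover have "w \<noteq> []" "set w \<subseteq> {0..d}"
      using w by (auto simp: open_kautz_words_def kautz_words_def)
    then have "last w \<le> d" using last_in_set by fastforce
    ultimately show "u \<in> closed_kautz_words d (Suc (Suc n))"
      using w
      by (auto simp: closed_kautz_words_def open_kautz_words_def Cons_in_kautz_words_iff)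
  qed
  then show ?thesis by (simp add: card_image inj_on_def)
qed

lemma card_closed_kautz_words:
  "int (card (closed_kautz_words d (Suc n))) = int d ^ n + (-1) ^ n * int d"
proof (induction n)
  case 0
  have "closed_kautz_words d 1 = kautz_words d 1"
    by (auto simp: closed_kautz_words_def kautz_words_def length_Suc_conv)
  then show ?case using card_kautz_words[of d 0] by simp
next
  case (Suc n)
  have "int (card (closed_kautz_words d (Suc (Suc n))))
      = int (card (kautz_words d (Suc n))) - int (card (closed_kautz_words d (Suc n)))"
    using card_closed_kautz_words_Suc_Suc[of d n] card_closed_plus_open_kautz_words[of d "Suc n"]
    by simp
  also have "\<dots> = (int d + 1) * int d ^ n - (int d ^ n + (-1) ^ n * int d)"
    using Suc by (simp add: card_kautz_words algebra_simps)
  finally show ?case by (simp add: algebra_simps)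
qed

lemma ck_arcs_eq_image:
  "ck_arcs d (Suc (Suc k)) = (\<lambda>(m, x, v). (x # m, m @ [v])) `
     (SIGMA m:kautz_words d (Suc k). extension_letters d m \<times> extension_letters d m)"
  (is "_ = ?f ` ?T")
proof (intro equalityI subsetI)
  have vertices: "ck_vertices d (Suc (Suc k)) = open_kautz_words d (Suc (Suc k))"
    by (simp add: ck_vertices_eq_open_kautz_words)
  fix ab assume "ab \<in> ck_arcs d (Suc (Suc k))"
  then obtain a b where ab: "ab = (a, b)"
    and a: "a \<in> open_kautz_words d (Suc (Suc k))" and b: "b \<in> open_kautz_words d (Suc (Suc k))"
    and shift: "\<forall>i. i + 1 < Suc (Suc k) \<longrightarrow> b ! i = a ! (i + 1)"
    unfolding ck_arcs_def vertices by blast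
  have "length a = Suc (Suc k)" "length b = Suc (Suc k)"
    using a b by (simp_all add: open_kautz_words_def kautz_words_def)
  then obtain x m m' v where am: "a = x # m" and bm: "b = m' @ [v]"
    and m: "length m = Suc k" and m': "length m' = Suc k"
    by (cases a; cases b rule: rev_cases) auto
  have "m' = m"
  proof (rule nth_equalityI)
    fix i assume "i < length m'"
    then have "b ! i = a ! (i + 1)" "b ! i = m' ! i" using shift m' bm by (auto simp: nth_append)
    then show "m' ! i = m ! i" by (simp add: am)
  qed (simp add: m m')
  moreover have "m \<noteq> []" using m by auto
  ultimately have "(m, x, v) \<in> ?T" using a b
    by (auto simp: am bm open_kautz_words_def extension_letters_def Cons_in_kautz_words_iff
        snoc_in_kautz_words_iff)
  then show "ab \<in> ?f ` ?T" unfolding ab am bm \<open>m' = m\<close> by force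
next
  fix ab assume "ab \<in> ?f ` ?T"
  then obtain m x v where ab: "ab = (x # m, m @ [v])" and m: "m \<in> kautz_words d (Suc k)"
    and x: "x \<in> extension_letters d m" and v: "v \<in> extension_letters d m"
    by auto
  have "m \<noteq> []" using m by (auto simp: kautz_words_def)
  with m x v have "x # m \<in> ck_vertices d (Suc (Suc k))" "m @ [v] \<in> ck_vertices d (Suc (Suc k))"
    by (auto simp: ck_vertices_eq_open_kautz_words open_kautz_words_def extension_letters_def
        Cons_in_kautz_words_iff snoc_in_kautz_words_iff)
  moreover have "length m = Suc k" using m by (simp add: kautz_words_def)
  ultimately show "ab \<in> ck_arcs d (Suc (Suc k))"
    unfolding ck_arcs_def ab by (auto simp: nth_append)
qed

lemma card_extension_letters:
  assumes "m \<in> kautz_words d (Suc k)"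
  shows "card (extension_letters d m) = (if hd m = last m then d else d - 1)"
proof -
  have "m \<noteq> []" "set m \<subseteq> {0..d}" using assms by (auto simp: kautz_words_def)
  then have "{hd m, last m} \<subseteq> {0..d}" using hd_in_set last_in_set by blast
  then show ?thesis
    unfolding extension_letters_def by (simp add: card_Diff_subset card_insert_if)
qed

lemma card_ck_arcs_Suc_Suc:
  "card (ck_arcs d (Suc (Suc k)))
     = card (closed_kautz_words d (Suc k)) * d\<^sup>2 + card (open_kautz_words d (Suc k)) * (d - 1)\<^sup>2"
proof -
  let ?W = "kautz_words d (Suc k)" and ?E = "extension_letters d"
  have "inj_on (\<lambda>(m, x, v). (x # m, m @ [v])) (SIGMA m:?W. ?E m \<times> ?E m)"
    by (auto simp: inj_on_def)
  then have "card (ck_arcs d (Suc (Suc k))) = card (SIGMA m:?W. ?E m \<times> ?E m)"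
    by (simp add: ck_arcs_eq_image card_image)
  also have "\<dots> = (\<Sum>m\<in>?W. card (?E m \<times> ?E m))"
    by (rule card_SigmaI) (simp_all add: finite_kautz_words extension_letters_def)
  also have "\<dots> = (\<Sum>m\<in>?W. if hd m = last m then d\<^sup>2 else (d - 1)\<^sup>2)"
    by (rule sum.cong) (simp_all add: card_cartesian_product card_extension_letters power2_eq_square)
  also have "\<dots> = card (closed_kautz_words d (Suc k)) * d\<^sup>2
      + card (open_kautz_words d (Suc k)) * (d - 1)\<^sup>2"
  proof -
    have "?W \<inter> {m. hd m = last m} = closed_kautz_words d (Suc k)"
      and "?W \<inter> - {m. hd m = last m} = open_kautz_words d (Suc k)"
      by (auto simp: closed_kautz_words_def open_kautz_words_def)
    then show ?thesis by (simp add: sum.If_cases finite_kautz_words)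
  qed
  finally show ?thesis .
qed

theorem proposition2:
  fixes d l :: nat
  assumes "d \<ge> 1" and "l \<ge> 3"
  shows "int (card (ck_arcs d l)) =
    (int d + 1) * int d ^ l - (2 * int d - 1) * ((-1) ^ (l - 1) * int d + int d ^ (l - 1))"
proof -
  have "\<exists>k. l = Suc (Suc k)" using assms(2) by presburger
  then obtain k where l: "l = Suc (Suc k)" ..
  let ?C = "int (card (closed_kautz_words d (Suc k)))"
  have "card (closed_kautz_words d (Suc k)) + card (open_kautz_words d (Suc k)) = (d + 1) * d ^ k"
    using card_closed_plus_open_kautz_words card_kautz_words by simp
  then have "int (card (closed_kautz_words d (Suc k)) + card (open_kautz_words d (Suc k)))
      = int ((d + 1) * d ^ k)"
    by (rule arg_cong)
  then have open_count: "int (card (open_kautz_words d (Suc k))) = (int d + 1) * int d ^ k - ?C"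
    by (simp add: algebra_simps)
  have "int (card (ck_arcs d l)) = ?C * int d ^ 2 + ((int d + 1) * int d ^ k - ?C) * (int d - 1) ^ 2"
    using assms(1) by (simp add: l card_ck_arcs_Suc_Suc open_count)
  also have "\<dots> = (int d + 1) * int d ^ l - (2 * int d - 1) * ((-1) ^ (l - 1) * int d + int d ^ (l - 1))"
    by (simp add: card_closed_kautz_words l algebra_simps power2_eq_square)
  finally show ?thesis .
qed

end
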